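(* In the standing setup, assume in addition $2f\le n$. Let $T$ be a valid partial table. Then there exist a valid partial table $T'$ whose row sets $S'_i$ satisfy $|S'_i|=|S_i|$ for every $i\in\{1,\dots,f\}$, and pairwise distinct columns $b_1,\dots,b_f\in\{1,\dots,n\}$, such that for every $i$ for which $S'_i$ is not a basis of $M$ we have $T'(i,b_i)=\emptyset$.
   Context: Standing setup: $M$ is a matroid of rank $n$ on ground set $E$; $f\le n$ is a positive integer; for each $i\in\{1,\dots,f\}$ and $j\in\{1,\dots,n\}$, $B_{i,j}$ is a basis of $M$, and the sets $B_{i,j}$ are pairwise disjoint. A valid partial table $T$ assigns to each position $(i,j)\in[f]\times[n]$ either the symbol $\emptyset$ (the position is empty) or an element $T(i,j)\in B_{i,j}$, such that for every row $i$ the set $S_i=\{T(i,j):T(i,j)\ne\emptyset\}$ is independent and for every column $j$ the set $C_j=\{T(i,j):T(i,j)\neq\emptyset\}$ is independent. *)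

theory Defs
  imports Main
begin

definition matroid :: "'a set \<Rightarrow> ('a set \<Rightarrow> bool) \<Rightarrow> bool" where
  "matroid E indep \<longleftrightarrow>
     finite E \<and>
     (\<forall>X. indep X \<longrightarrow> X \<subseteq> E) \<and>
     indep {} \<and>
     (\<forall>X Y. indep X \<and> Y \<subseteq> X \<longrightarrow> indep Y) \<and>
     (\<forall>X Y. indep X \<and> indep Y \<and> card X < card Y \<longrightarrow>
        (\<exists>y \<in> Y - X. indep (insert y X)))"

definition basis :: "'a set \<Rightarrow> ('a set \<Rightarrow> bool) \<Rightarrow> 'a set \<Rightarrow> bool" where
  "basis E indep B \<longleftrightarrow> indep B \<and> (\<forall>x \<in> E - B. \<not> indep (insert x B))"

definition mrank :: "'a set \<Rightarrow> ('a set \<Rightarrow> bool) \<Rightarrow> nat" where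
  "mrank E indep = Max (card ` {X. indep X})"

text \<open>A partial table is a function from positions (i,j) to entries;
  None is the empty symbol. Row set S_i and column set C_j.\<close>
definition row_set :: "(nat \<Rightarrow> nat \<Rightarrow> 'a option) \<Rightarrow> nat \<Rightarrow> nat \<Rightarrow> 'a set" where
  "row_set T n i = {x. \<exists>j \<in> {1..n}. T i j = Some x}"

definition col_set :: "(nat \<Rightarrow> nat \<Rightarrow> 'a option) \<Rightarrow> nat \<Rightarrow> nat \<Rightarrow> 'a set" where
  "col_set T f j = {x. \<exists>i \<in> {1..f}. T i j = Some x}"

definition valid_table ::
  "('a set \<Rightarrow> bool) \<Rightarrow> nat \<Rightarrow> nat \<Rightarrow> (nat \<Rightarrow> nat \<Rightarrow> 'a set) \<Rightarrow> (nat \<Rightarrow> nat \<Rightarrow> 'a option) \<Rightarrow> bool" where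
  "valid_table indep f n B T \<longleftrightarrow>
     (\<forall>i \<in> {1..f}. \<forall>j \<in> {1..n}. \<forall>x. T i j = Some x \<longrightarrow> x \<in> B i j) \<and>
     (\<forall>i \<in> {1..f}. indep (row_set T n i)) \<and>
     (\<forall>j \<in> {1..n}. indep (col_set T f j))"

end

theory Submission imports Defs begin

text \<open>The rows are settled one after another, keeping the chosen columns distinct.
  Let \<open>U\<close> be the set of columns used by the earlier rows, so \<open>|U| < f\<close>.
  If row \<open>i\<close> has an empty cell outside \<open>U\<close>, or is full (and then a basis, its \<open>n\<close> entries
  lying in pairwise disjoint bases), nothing has to be changed. Otherwise it has an empty cell
  \<open>j\<^sub>0\<close> and is full outside \<open>U\<close>. At most \<open>f\<close> elements of the basis \<open>B i j\<^sub>0\<close> fail to extend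
  column \<open>j\<^sub>0\<close>, and fewer than \<open>f\<close> fail to extend the set \<open>K\<close> of row entries in the columns
  \<open>U\<close>; as \<open>|B i j\<^sub>0| = n \<ge> 2f\<close>, some \<open>y\<close> extends both. By matroid exchange \<open>y\<close> can replace
  an entry \<open>x\<notin>K\<close> of row \<open>i\<close>, which sits in a column \<open>j\<notin>U\<close>. Moving \<open>y\<close> into cell \<open>(i,j\<^sub>0)\<close>
  and emptying \<open>(i,j)\<close> keeps the table valid and the row size, and frees column \<open>j\<close> for row \<open>i\<close>.\<close>

lemma card_insert_Diff_singleton:
  assumes "finite A" "x \<in> A" "y \<notin> A"
  shows "card (insert y (A - {x})) = card A"
proof -
  have "card A > 0" using assms(1,2) card_gt_0_iff by blast
  then show ?thesis using assms by (simp add: card_Diff_singleton)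
qed

lemma ex_not_in_card_less: "finite U \<Longrightarrow> card U < n \<Longrightarrow> \<exists>j\<in>{1..n}. j \<notin> U"
  using card_mono[of U "{1..n}"] by fastforce

context
  fixes E :: "'a set" and indep :: "'a set \<Rightarrow> bool"
  assumes M: "matroid E indep"
begin

lemma indep_subset_ground: "indep X \<Longrightarrow> X \<subseteq> E"
  using M unfolding matroid_def by blast

lemma indep_finite: "indep X \<Longrightarrow> finite X"
  using M indep_subset_ground by (meson finite_subset matroid_def)

lemma indep_empty: "indep {}"
  using M unfolding matroid_def by blast

lemma indep_subset: "indep X \<Longrightarrow> Y \<subseteq> X \<Longrightarrow> indep Y"
  using M unfolding matroid_def by blast

lemma indep_augment: "indep X \<Longrightarrow> indep Y \<Longrightarrow> card X < card Y \<Longrightarrow> \<exists>y\<in>Y - X. indep (insert y X)"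
  using M unfolding matroid_def by blast

lemma card_non_extending_le:
  assumes I: "indep I" and Y: "indep Y"
  shows "card {y\<in>Y. y \<in> I \<or> \<not> indep (insert y I)} \<le> card I"
proof (rule ccontr)
  let ?D = "{y\<in>Y. y \<in> I \<or> \<not> indep (insert y I)}"
  assume "\<not> ?thesis"
  then have "card I < card ?D" by linarith
  moreover have "indep ?D" using Y by (rule indep_subset) auto
  ultimately obtain y where "y \<in> ?D - I" "indep (insert y I)"
    using indep_augment[OF I] by blast
  then show False by blast
qed

lemma exists_common_extension:
  assumes Y: "indep Y" and C: "indep C" and D: "indep D" and small: "card C + card D < card Y"
  shows "\<exists>y\<in>Y. y \<notin> C \<and> y \<notin> D \<and> indep (insert y C) \<and> indep (insert y D)"
proof (rule ccontr)
  let ?DC = "{y\<in>Y. y \<in> C \<or> \<not> indep (insert y C)}"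
  let ?DD = "{y\<in>Y. y \<in> D \<or> \<not> indep (insert y D)}"
  assume "\<not> ?thesis"
  then have "Y = ?DC \<union> ?DD" by blast
  then have "card Y = card (?DC \<union> ?DD)" by (rule arg_cong)
  also have "\<dots> \<le> card ?DC + card ?DD" by (rule card_Un_le)
  also have "\<dots> \<le> card C + card D"
    using card_non_extending_le[OF C Y] card_non_extending_le[OF D Y] by linarith
  finally show False using small by linarith
qed

lemma indep_augment_to_card:
  assumes "indep J" and A: "indep A" and "card J \<le> card A"
  shows "\<exists>I. J \<subseteq> I \<and> I \<subseteq> J \<union> A \<and> indep I \<and> card I = card A"
  using assms(1,3)
proof (induction "card A - card J" arbitrary: J)
  case 0
  then show ?case by (intro exI[of _ J]) auto
next
  case (Suc d)
  then have "card J < card A" by linarith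
  then obtain a where a: "a \<in> A - J" "indep (insert a J)"
    using indep_augment[OF Suc.prems(1) A] by blast
  have "card (insert a J) = Suc (card J)"
    using a(1) indep_finite[OF Suc.prems(1)] by simp
  then have "d = card A - card (insert a J)" "card (insert a J) \<le> card A"
    using Suc.hyps(2) by linarith+
  then obtain I where "insert a J \<subseteq> I" "I \<subseteq> insert a J \<union> A" "indep I" "card I = card A"
    using Suc.hyps(1)[OF _ a(2)] by blast
  then show ?case using a(1) by (intro exI[of _ I]) auto
qed

lemma indep_exchange:
  assumes A: "indep A" and K: "K \<subset> A" and y: "y \<notin> A" "indep (insert y K)"
  shows "\<exists>x\<in>A - K. indep (insert y (A - {x}))"
proof -
  have fA: "finite A" using indep_finite[OF A] .
  have "finite K" using finite_subset[OF psubset_imp_subset[OF K] fA] .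
  moreover have "card K < card A" by (rule psubset_card_mono[OF fA K])
  ultimately have "card (insert y K) \<le> card A" by (simp add: card_insert_if)
  then obtain I where I: "insert y K \<subseteq> I" "I \<subseteq> insert y A" "indep I" "card I = card A"
    using indep_augment_to_card[OF y(2) A] K by auto
  have fI: "finite I" using indep_finite[OF I(3)] .
  have "A \<noteq> {}" using K by blast
  then have "card A > 0" using fA by (simp add: card_gt_0_iff)
  then have "card (I - {y}) < card A"
    using I(1,4) fI by (simp add: card_Diff_singleton)
  then have "\<not> A \<subseteq> I - {y}"
    using card_mono[OF finite_Diff[OF fI], of A "{y}"] by linarith
  then obtain x where x: "x \<in> A" "x \<notin> I"
    using y(1) by blast
  have "I = insert y (A - {x})"
  proof (rule card_subset_eq)
    show "finite (insert y (A - {x}))" using fA by simp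
    show "I \<subseteq> insert y (A - {x})" using I(2) x(2) by blast
    show "card I = card (insert y (A - {x}))"
      using I(4) card_insert_Diff_singleton[OF fA x(1) y(1)] by simp
  qed
  then show ?thesis using x I(1,3) by blast
qed

lemma finite_indep_cards: "finite (card ` {X. indep X})"
proof (rule finite_subset)
  show "card ` {X. indep X} \<subseteq> {..card E}"
    using M indep_subset_ground by (auto simp: matroid_def intro!: card_mono)
qed simp

lemma card_le_mrank: "indep X \<Longrightarrow> card X \<le> mrank E indep"
  unfolding mrank_def by (rule Max_ge[OF finite_indep_cards]) simp

lemma ex_indep_card_mrank: "\<exists>X. indep X \<and> card X = mrank E indep"
proof -
  have "mrank E indep \<in> card ` {X. indep X}"
    unfolding mrank_def using finite_indep_cards indep_empty by (intro Max_in) auto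
  then show ?thesis by auto
qed

lemma basis_card_eq_mrank:
  assumes B: "basis E indep B"
  shows "card B = mrank E indep"
proof -
  have iB: "indep B" using B by (simp add: basis_def)
  obtain X where X: "indep X" "card X = mrank E indep" using ex_indep_card_mrank by blast
  have "\<not> card B < card X"
  proof
    assume "card B < card X"
    then obtain y where "y \<in> X - B" "indep (insert y B)" using indep_augment[OF iB X(1)] by blast
    moreover have "y \<in> E" using indep_subset_ground[OF X(1)] \<open>y \<in> X - B\<close> by blast
    ultimately show False using B by (auto simp: basis_def)
  qed
  then show ?thesis using card_le_mrank[OF iB] X(2) by linarith
qed

lemma basis_if_card_eq_mrank:
  assumes I: "indep I" and card: "card I = mrank E indep"
  shows "basis E indep I"
  unfolding basis_def
proof (intro conjI I ballI notI)
  fix x assume x: "x \<in> E - I" and "indep (insert x I)"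
  then have "card (insert x I) \<le> mrank E indep" by (intro card_le_mrank)
  moreover have "card (insert x I) = Suc (card I)" using x indep_finite[OF I] by simp
  ultimately show False using card by simp
qed

end

lemma card_Some_set_le: "finite J \<Longrightarrow> card {x. \<exists>c\<in>J. g c = Some x} \<le> card J"
proof -
  assume "finite J"
  moreover have "{x. \<exists>c\<in>J. g c = Some x} \<subseteq> (the \<circ> g) ` J" by force
  ultimately show ?thesis by (meson card_image_le card_mono finite_imageI order_trans)
qed

definition row_exchange ::
  "(nat \<Rightarrow> nat \<Rightarrow> 'a option) \<Rightarrow> nat \<Rightarrow> nat \<Rightarrow> nat \<Rightarrow> 'a \<Rightarrow> nat \<Rightarrow> nat \<Rightarrow> 'a option" where
  "row_exchange T i j j0 y =
     (\<lambda>a c. if a = i \<and> c = j then None else if a = i \<and> c = j0 then Some y else T a c)"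

lemma row_exchange_other_row [simp]: "a \<noteq> i \<Longrightarrow> row_exchange T i j j0 y a = T a"
  by (simp add: row_exchange_def fun_eq_iff)

lemma row_set_row_exchange:
  assumes j: "j \<in> {1..n}" "T i j = Some x" and j0: "j0 \<in> {1..n}" "T i j0 = None"
    and x_unique: "\<forall>c\<in>{1..n}. T i c = Some x \<longrightarrow> c = j"
  shows "row_set (row_exchange T i j j0 y) n i = insert y (row_set T n i - {x})"
proof (intro equalityI subsetI)
  have jj0: "j \<noteq> j0" using j(2) j0(2) by auto
  fix z
  assume "z \<in> row_set (row_exchange T i j j0 y) n i"
  then obtain c where c: "c \<in> {1..n}" "row_exchange T i j j0 y i c = Some z"
    unfolding row_set_def by blast
  show "z \<in> insert y (row_set T n i - {x})"
  proof (cases "c = j0")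
    case False
    then have "T i c = Some z" "c \<noteq> j" using c(2) by (auto simp: row_exchange_def split: if_splits)
    then show ?thesis using c(1) x_unique unfolding row_set_def by blast
  qed (use c jj0 in \<open>simp add: row_exchange_def\<close>)
next
  fix z
  assume "z \<in> insert y (row_set T n i - {x})"
  then consider "z = y" | c where "c \<in> {1..n}" "T i c = Some z" "z \<noteq> x"
    unfolding row_set_def by blast
  then show "z \<in> row_set (row_exchange T i j j0 y) n i"
  proof cases
    case 1
    have "j \<noteq> j0" using j(2) j0(2) by auto
    then show ?thesis using 1 j0(1) unfolding row_set_def row_exchange_def by force
  next
    case 2
    then have "c \<noteq> j" "c \<noteq> j0" using j(2) j0(2) by auto
    then show ?thesis using 2 unfolding row_set_def row_exchange_def by force
  qed
qed

lemma col_set_row_exchange_target: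
  "j \<noteq> j0 \<Longrightarrow> col_set (row_exchange T i j j0 y) f j0 \<subseteq> insert y (col_set T f j0)"
  unfolding col_set_def row_exchange_def by auto

lemma col_set_row_exchange_other:
  "c \<noteq> j0 \<Longrightarrow> col_set (row_exchange T i j j0 y) f c \<subseteq> col_set T f c"
  unfolding col_set_def row_exchange_def by auto

locale basis_table =
  fixes E :: "'a set" and indep :: "'a set \<Rightarrow> bool" and f n :: nat
    and B :: "nat \<Rightarrow> nat \<Rightarrow> 'a set"
  assumes matroid: "matroid E indep"
    and rank: "mrank E indep = n"
    and bases: "\<forall>i \<in> {1..f}. \<forall>j \<in> {1..n}. basis E indep (B i j)"
    and disjoint: "\<forall>i \<in> {1..f}. \<forall>j \<in> {1..n}. \<forall>i' \<in> {1..f}. \<forall>j' \<in> {1..n}.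
                  (i, j) \<noteq> (i', j') \<longrightarrow> B i j \<inter> B i' j' = {}"
begin

abbreviation valid :: "(nat \<Rightarrow> nat \<Rightarrow> 'a option) \<Rightarrow> bool" where
  "valid T \<equiv> valid_table indep f n B T"

lemma valid_entry: "valid T \<Longrightarrow> i \<in> {1..f} \<Longrightarrow> j \<in> {1..n} \<Longrightarrow> T i j = Some x \<Longrightarrow> x \<in> B i j"
  by (simp add: valid_table_def)

lemma valid_row: "valid T \<Longrightarrow> i \<in> {1..f} \<Longrightarrow> indep (row_set T n i)"
  by (simp add: valid_table_def)

lemma valid_col: "valid T \<Longrightarrow> j \<in> {1..n} \<Longrightarrow> indep (col_set T f j)"
  by (simp add: valid_table_def)

lemma entry_determines_cell:
  assumes "valid T" "i \<in> {1..f}" "j \<in> {1..n}" "T i j = Some x"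
    and "i' \<in> {1..f}" "j' \<in> {1..n}" "x \<in> B i' j'"
  shows "i = i' \<and> j = j'"
proof (rule ccontr)
  assume "\<not> (i = i' \<and> j = j')"
  then have "B i j \<inter> B i' j' = {}" using disjoint[rule_format, OF assms(2,3,5,6)] by simp
  then show False using valid_entry[OF assms(1-4)] assms(7) by blast
qed

lemma full_row_basis:
  assumes T: "valid T" and i: "i \<in> {1..f}" and full: "\<forall>j\<in>{1..n}. T i j \<noteq> None"
  shows "basis E indep (row_set T n i)"
proof (rule basis_if_card_eq_mrank[OF matroid valid_row[OF T i]])
  have "row_set T n i = (\<lambda>j. the (T i j)) ` {1..n}"
    unfolding row_set_def using full by force
  moreover have "inj_on (\<lambda>j. the (T i j)) {1..n}"
  proof (rule inj_onI)
    fix j j' assume j: "j \<in> {1..n}" "j' \<in> {1..n}" and eq: "the (T i j) = the (T i j')"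
    obtain x where "T i j = Some x" "T i j' = Some x" using full j eq by fastforce
    then show "j = j'" using entry_determines_cell[OF T i j(1) _ i j(2)] valid_entry[OF T i j(2)] by blast
  qed
  ultimately show "card (row_set T n i) = mrank E indep" by (simp add: card_image rank)
qed

lemma valid_row_exchange:
  assumes T: "valid T" and i: "i \<in> {1..f}"
    and j: "j \<in> {1..n}" "T i j = Some x" and j0: "j0 \<in> {1..n}" "T i j0 = None"
    and y: "y \<in> B i j0" "indep (insert y (row_set T n i - {x}))" "indep (insert y (col_set T f j0))"
  shows "valid (row_exchange T i j j0 y)"
    and "row_set (row_exchange T i j j0 y) n i = insert y (row_set T n i - {x})"
proof -
  have jj0: "j \<noteq> j0" using j(2) j0(2) by auto
  show row: "row_set (row_exchange T i j j0 y) n i = insert y (row_set T n i - {x})"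
    using j j0 entry_determines_cell[OF T i _ _ i j(1)] valid_entry[OF T i j]
    by (intro row_set_row_exchange) blast+
  show "valid (row_exchange T i j j0 y)"
    unfolding valid_table_def
  proof (intro conjI ballI allI impI)
    fix a c z assume a: "a \<in> {1..f}" and c: "c \<in> {1..n}" and z: "row_exchange T i j j0 y a c = Some z"
    show "z \<in> B a c"
    proof (cases "a = i \<and> c = j0")
      case False
      then have "T a c = Some z" using z by (auto simp: row_exchange_def split: if_splits)
      then show ?thesis using valid_entry[OF T a c] by blast
    qed (use z y(1) jj0 in \<open>auto simp: row_exchange_def\<close>)
  next
    fix a assume a: "a \<in> {1..f}"
    show "indep (row_set (row_exchange T i j j0 y) n a)"
    proof (cases "a = i")
      case False
      then show ?thesis using valid_row[OF T a] by (simp add: row_set_def)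
    qed (simp add: row y(2))
  next
    fix c assume c: "c \<in> {1..n}"
    show "indep (col_set (row_exchange T i j j0 y) f c)"
    proof (cases "c = j0")
      case True
      then show ?thesis using indep_subset[OF matroid y(3) col_set_row_exchange_target[OF jj0]] by simp
    next
      case False
      then show ?thesis using indep_subset[OF matroid valid_col[OF T c] col_set_row_exchange_other] by blast
    qed
  qed
qed

lemma exists_cell_element_extending:
  assumes f2n: "2 * f \<le> n" and T: "valid T" and i: "i \<in> {1..f}" and j0: "j0 \<in> {1..n}"
    and K: "indep K" "card K < f"
  shows "\<exists>y\<in>B i j0. y \<notin> K \<and> indep (insert y K) \<and> indep (insert y (col_set T f j0))"
proof -
  have "card (col_set T f j0) \<le> f"
    using card_Some_set_le[of "{1..f}" "\<lambda>a. T a j0"] unfolding col_set_def by simp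
  moreover have B0: "basis E indep (B i j0)" using bases i j0 by blast
  then have "card (B i j0) = n" using basis_card_eq_mrank[OF matroid] rank by simp
  ultimately have "card (col_set T f j0) + card K < card (B i j0)" using K(2) f2n by linarith
  then show ?thesis
    using exists_common_extension[OF matroid _ valid_col[OF T j0] K(1)] B0
    unfolding basis_def by blast
qed

lemma exists_row_exchange:
  assumes f2n: "2 * f \<le> n" and T: "valid T" and i: "i \<in> {1..f}"
    and U: "U \<subseteq> {1..n}" "card U < f"
    and j0: "j0 \<in> {1..n}" "T i j0 = None" and full_outside: "\<forall>j\<in>{1..n} - U. T i j \<noteq> None"
  shows "\<exists>j\<in>{1..n} - U. \<exists>T'. valid T' \<and> (\<forall>a. a \<noteq> i \<longrightarrow> T' a = T a) \<and>
           card (row_set T' n i) = card (row_set T n i) \<and> T' i j = None"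
proof -
  define A where "A = row_set T n i"
  define K where "K = {x. \<exists>c\<in>U. T i c = Some x}"
  have iA: "indep A" unfolding A_def using valid_row[OF T i] .
  have fA: "finite A" using indep_finite[OF matroid iA] .
  have KA: "K \<subseteq> A" using U(1) unfolding K_def A_def row_set_def by blast
  have "card K < f"
    using card_Some_set_le[of U "T i"] U finite_subset[OF U(1)] unfolding K_def by simp
  then obtain y where y: "y \<in> B i j0" "y \<notin> K" "indep (insert y K)" "indep (insert y (col_set T f j0))"
    using exists_cell_element_extending[OF f2n T i j0(1) indep_subset[OF matroid iA KA]] by blast
  have yA: "y \<notin> A"
  proof
    assume "y \<in> A"
    then obtain c where c: "c \<in> {1..n}" "T i c = Some y" unfolding A_def row_set_def by blast
    then have "c = j0" using entry_determines_cell[OF T i c i j0(1) y(1)] by simp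
    then show False using c(2) j0(2) by simp
  qed
  have "card U < n" using U(2) f2n by linarith
  then obtain j1 where j1: "j1 \<in> {1..n}" "j1 \<notin> U"
    using ex_not_in_card_less[OF finite_subset[OF U(1)]] by blast
  then obtain z1 where z1: "T i j1 = Some z1" using full_outside by blast
  have "z1 \<notin> K"
  proof
    assume "z1 \<in> K"
    then obtain c where c: "c \<in> U" "T i c = Some z1" unfolding K_def by blast
    have "c = j1"
      using entry_determines_cell[OF T i _ c(2) i j1(1) valid_entry[OF T i j1(1) z1]] c(1) U(1) by blast
    then show False using c(1) j1(2) by simp
  qed
  moreover have "z1 \<in> A" using z1 j1(1) unfolding A_def row_set_def by blast
  ultimately have "K \<subset> A" using KA by blast
  then obtain x where x: "x \<in> A" "x \<notin> K" "indep (insert y (A - {x}))"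
    using indep_exchange[OF matroid iA _ yA y(3)] by blast
  then obtain j where j: "j \<in> {1..n}" "T i j = Some x" unfolding A_def row_set_def by blast
  have "j \<notin> U" using j(2) x(2) unfolding K_def by blast
  moreover have "valid (row_exchange T i j j0 y)"
    and "row_set (row_exchange T i j j0 y) n i = insert y (A - {x})"
    using valid_row_exchange[OF T i j j0 y(1)] x(3) y(4) unfolding A_def by blast+
  ultimately show ?thesis
    using j(1) card_insert_Diff_singleton[OF fA x(1) yA] unfolding A_def
    by (intro bexI[of _ j] exI[of _ "row_exchange T i j j0 y"]) (simp_all add: row_exchange_def)
qed

lemma exists_settling_column:
  assumes f2n: "2 * f \<le> n" and T: "valid T" and i: "i \<in> {1..f}"
    and U: "U \<subseteq> {1..n}" "card U < f"
  shows "\<exists>j\<in>{1..n} - U. \<exists>T'. valid T' \<and> (\<forall>a. a \<noteq> i \<longrightarrow> T' a = T a) \<and>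
           card (row_set T' n i) = card (row_set T n i) \<and>
           (T' i j = None \<or> (\<forall>c\<in>{1..n}. T' i c \<noteq> None))"
proof -
  have "card U < n" using U(2) f2n by linarith
  then obtain j1 where j1: "j1 \<in> {1..n} - U"
    using ex_not_in_card_less[OF finite_subset[OF U(1)]] by blast
  consider (empty_outside) j where "j \<in> {1..n} - U" "T i j = None"
    | (full) "\<forall>c\<in>{1..n}. T i c \<noteq> None"
    | (exchange) j0 where "j0 \<in> {1..n}" "T i j0 = None" "\<forall>j\<in>{1..n} - U. T i j \<noteq> None"
    by blast
  then show ?thesis
  proof cases
    case empty_outside
    then show ?thesis using T by (intro bexI[of _ j] exI[of _ T]) simp_all
  next
    case full
    then show ?thesis using T j1 by (intro bexI[of _ j1] exI[of _ T]) simp_all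
  next
    case exchange
    then show ?thesis using exists_row_exchange[OF f2n T i U exchange] by blast
  qed
qed

definition settled_upto ::
  "(nat \<Rightarrow> nat \<Rightarrow> 'a option) \<Rightarrow> (nat \<Rightarrow> nat \<Rightarrow> 'a option) \<Rightarrow> (nat \<Rightarrow> nat) \<Rightarrow> nat \<Rightarrow> bool" where
  "settled_upto T T' b m \<longleftrightarrow> valid T' \<and>
     (\<forall>i\<in>{1..f}. card (row_set T' n i) = card (row_set T n i)) \<and>
     b ` {1..m} \<subseteq> {1..n} \<and> inj_on b {1..m} \<and>
     (\<forall>i\<in>{1..m}. T' i (b i) = None \<or> (\<forall>j\<in>{1..n}. T' i j \<noteq> None))"

lemma settled_upto_Suc:
  assumes f2n: "2 * f \<le> n" and m: "Suc m \<le> f" and S: "settled_upto T T' b m"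
  shows "\<exists>T'' b'. settled_upto T T'' b' (Suc m)"
proof -
  have i: "Suc m \<in> {1..f}" using m by simp
  have U: "b ` {1..m} \<subseteq> {1..n}" "card (b ` {1..m}) < f"
    using S m card_image_le[of "{1..m}" b] by (auto simp: settled_upto_def)
  have "valid T'" using S by (simp add: settled_upto_def)
  then obtain j T'' where j: "j \<in> {1..n} - b ` {1..m}" and T'': "valid T''"
    "\<forall>a. a \<noteq> Suc m \<longrightarrow> T'' a = T' a" "card (row_set T'' n (Suc m)) = card (row_set T' n (Suc m))"
    "T'' (Suc m) j = None \<or> (\<forall>c\<in>{1..n}. T'' (Suc m) c \<noteq> None)"
    using exists_settling_column[OF f2n _ i U] by blast
  have "row_set T'' n a = row_set T' n a" if "a \<noteq> Suc m" for a
    using T''(2) that by (simp add: row_set_def)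
  then have cards: "\<forall>a\<in>{1..f}. card (row_set T'' n a) = card (row_set T n a)"
    using S T''(3) i by (metis settled_upto_def)
  let ?b = "b(Suc m := j)"
  have "?b ` {1..Suc m} \<subseteq> {1..n}" "inj_on ?b {1..Suc m}"
    using S j by (auto simp: settled_upto_def atLeastAtMostSuc_conv inj_on_fun_updI)
  moreover have "\<forall>a\<in>{1..Suc m}. T'' a (?b a) = None \<or> (\<forall>c\<in>{1..n}. T'' a c \<noteq> None)"
    using S T''(2,4) by (auto simp: settled_upto_def atLeastAtMostSuc_conv)
  ultimately have "settled_upto T T'' ?b (Suc m)"
    using T''(1) cards unfolding settled_upto_def by blast
  then show ?thesis by blast
qed

lemma settled_upto_exists:
  assumes f2n: "2 * f \<le> n" and T: "valid T"
  shows "m \<le> f \<Longrightarrow> \<exists>T' b. settled_upto T T' b m"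
proof (induction m)
  case 0
  show ?case using T by (auto simp: settled_upto_def)
next
  case (Suc m)
  then show ?case using settled_upto_Suc[OF f2n] by (meson Suc_leD)
qed

end

theorem mainTheorem7:
  fixes E :: "'a set" and indep :: "'a set \<Rightarrow> bool" and f n :: nat
    and B :: "nat \<Rightarrow> nat \<Rightarrow> 'a set" and T :: "nat \<Rightarrow> nat \<Rightarrow> 'a option"
  assumes M: "matroid E indep"
    and rk: "mrank E indep = n"
    and fpos: "0 < f" and fn: "f \<le> n" and f2n: "2 * f \<le> n"
    and Bbasis: "\<forall>i \<in> {1..f}. \<forall>j \<in> {1..n}. basis E indep (B i j)"
    and Bdisj: "\<forall>i \<in> {1..f}. \<forall>j \<in> {1..n}. \<forall>i' \<in> {1..f}. \<forall>j' \<in> {1..n}.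
                  (i, j) \<noteq> (i', j') \<longrightarrow> B i j \<inter> B i' j' = {}"
    and T: "valid_table indep f n B T"
  shows "\<exists>T' (b :: nat \<Rightarrow> nat).
           valid_table indep f n B T' \<and>
           (\<forall>i \<in> {1..f}. card (row_set T' n i) = card (row_set T n i)) \<and>
           b ` {1..f} \<subseteq> {1..n} \<and> inj_on b {1..f} \<and>
           (\<forall>i \<in> {1..f}. \<not> basis E indep (row_set T' n i) \<longrightarrow> T' i (b i) = None)"
proof -
  interpret basis_table E indep f n B
    using M rk Bbasis Bdisj by unfold_locales
  obtain T' b where S: "settled_upto T T' b f"
    using settled_upto_exists[OF f2n T order_refl] by blast
  then have "\<forall>i \<in> {1..f}. \<not> basis E indep (row_set T' n i) \<longrightarrow> T' i (b i) = None"
    using full_row_basis by (auto simp: settled_upto_def)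
  then show ?thesis using S by (auto simp: settled_upto_def)
qed

end
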